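(* Let $w$ be a decreasing weight on $(0,\infty)$. Then $w\in B_1$ if and only if for every $1<q<\infty$ there exists a weight $w_q$ satisfying $\big(\int_0^r w\big)^q\approx\int_0^r w_q(x)\,dx+r^q\int_r^\infty w_q(x)x^{-q}\,dx$ for all $r>0$ (constants independent of $r$) and such that $\Gamma^{1,q}(w)=\Gamma^q(w_q)$.
   Context: A weight is a nonnegative locally integrable measurable function on $(0,\infty)$; "decreasing" means nonincreasing; $W(t)=\int_0^t w$. For a measurable function $f$ on $\mathbb{R}^n$, $f^*$ is its decreasing rearrangement and $f^{**}(t)=\frac1t\int_0^t f^*(s)\,ds$. $\|f\|_{\Gamma^{1,q}(w)}=\big(\int_0^\infty (f^{**})^qW^{q-1}w\big)^{1/q}$ and $\|f\|_{\Gamma^q(u)}=\big(\int_0^\infty (f^{**})^q u\big)^{1/q}$, each space consisting of the $f$ with finite quantity; $X=Y$ means they coincide with equivalent norms. $w\in B_1$ means there is $C$ with $\int_r^\infty\frac{w(s)}{s}\,ds\le\frac Cr\int_0^r w(s)\,ds$ for all $r>0$. *)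

theory Defs
  imports "HOL-Analysis.Analysis"
begin

definition weight :: "(real \<Rightarrow> real) \<Rightarrow> bool" where
  "weight w \<longleftrightarrow> (\<forall>t>0. 0 \<le> w t) \<and> set_borel_measurable lborel {0<..} w \<and>
     (\<forall>t>0. set_integrable lborel {0<..t} w)"

definition decreasing_weight :: "(real \<Rightarrow> real) \<Rightarrow> bool" where
  "decreasing_weight w \<longleftrightarrow> weight w \<and> (\<forall>s t. 0 < s \<longrightarrow> s \<le> t \<longrightarrow> w t \<le> w s)"

definition Wprim :: "(real \<Rightarrow> real) \<Rightarrow> real \<Rightarrow> real" where
  "Wprim w t = (LINT s:{0<..t}|lborel. w s)"

definition B1 :: "(real \<Rightarrow> real) \<Rightarrow> bool" where
  "B1 w \<longleftrightarrow> (\<exists>C::real. \<forall>r>0.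
      (\<integral>\<^sup>+ s\<in>{r<..}. ennreal (w s / s) \<partial>lborel) \<le> ennreal (C / r * Wprim w r))"

text \<open>Real powers on extended nonnegative reals (used with positive exponents only).\<close>
definition enn_powr :: "ennreal \<Rightarrow> real \<Rightarrow> ennreal" where
  "enn_powr x p = (if x = \<infinity> then \<infinity> else ennreal (enn2real x powr p))"

definition drearr :: "('a::euclidean_space \<Rightarrow> real) \<Rightarrow> real \<Rightarrow> ennreal" where
  "drearr f t = Inf {s::ennreal. emeasure lebesgue {x. s < ennreal \<bar>f x\<bar>} \<le> ennreal t}"

definition dmax :: "('a::euclidean_space \<Rightarrow> real) \<Rightarrow> real \<Rightarrow> ennreal" where
  "dmax f t = ennreal (1 / t) * (\<integral>\<^sup>+ s\<in>{0<..<t}. drearr f s \<partial>lborel)"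

definition Gamma1q_norm :: "(real \<Rightarrow> real) \<Rightarrow> real \<Rightarrow> ('a::euclidean_space \<Rightarrow> real) \<Rightarrow> ennreal" where
  "Gamma1q_norm w q f = enn_powr
     (\<integral>\<^sup>+ t\<in>{0<..}. enn_powr (dmax f t) q * ennreal (Wprim w t powr (q - 1) * w t) \<partial>lborel) (1 / q)"

definition Gammaq_norm :: "(real \<Rightarrow> real) \<Rightarrow> real \<Rightarrow> ('a::euclidean_space \<Rightarrow> real) \<Rightarrow> ennreal" where
  "Gammaq_norm u q f = enn_powr
     (\<integral>\<^sup>+ t\<in>{0<..}. enn_powr (dmax f t) q * ennreal (u t) \<partial>lborel) (1 / q)"

definition Gamma1q :: "(real \<Rightarrow> real) \<Rightarrow> real \<Rightarrow> ('a::euclidean_space \<Rightarrow> real) set" where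
  "Gamma1q w q = {f \<in> borel_measurable lebesgue. Gamma1q_norm w q f < \<infinity>}"

definition Gammaq :: "(real \<Rightarrow> real) \<Rightarrow> real \<Rightarrow> ('a::euclidean_space \<Rightarrow> real) set" where
  "Gammaq u q = {f \<in> borel_measurable lebesgue. Gammaq_norm u q f < \<infinity>}"

definition Gamma_spaces_eq :: "'a::euclidean_space itself \<Rightarrow> (real \<Rightarrow> real) \<Rightarrow> real \<Rightarrow> (real \<Rightarrow> real) \<Rightarrow> bool" where
  "Gamma_spaces_eq _ w q u \<longleftrightarrow>
     (Gamma1q w q :: ('a \<Rightarrow> real) set) = Gammaq u q \<and>
     (\<exists>c C. 0 < c \<and> 0 < C \<and> (\<forall>f \<in> (Gamma1q w q :: ('a \<Rightarrow> real) set).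
        ennreal c * Gammaq_norm u q f \<le> Gamma1q_norm w q f \<and>
        Gamma1q_norm w q f \<le> ennreal C * Gammaq_norm u q f))"

definition level_equiv :: "(real \<Rightarrow> real) \<Rightarrow> real \<Rightarrow> (real \<Rightarrow> real) \<Rightarrow> bool" where
  "level_equiv w q u \<longleftrightarrow> (\<exists>c C. 0 < c \<and> 0 < C \<and> (\<forall>r>0.
     ennreal c * (ennreal (Wprim u r) + ennreal (r powr q) *
        (\<integral>\<^sup>+ x\<in>{r<..}. ennreal (u x * x powr (- q)) \<partial>lborel)) \<le> ennreal (Wprim w r powr q) \<and>
     ennreal (Wprim w r powr q) \<le> ennreal C * (ennreal (Wprim u r) + ennreal (r powr q) *
        (\<integral>\<^sup>+ x\<in>{r<..}. ennreal (u x * x powr (- q)) \<partial>lborel))))"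

end

(*
  Forward direction: take w_q = W^(q-1) w. The norms of Gamma^(1,q)(w) and Gamma^q(w_q) then
  coincide by definition, and the level equivalence reduces to two estimates. The local part
  int_0^r W^(q-1) w is comparable to W(r)^q for every weight: choosing s with W(s) = W(r)/2
  (W is continuous) gives the lower bound. The tail r^q int_r^oo W^(q-1)(x) w(x) x^(-q) dx is
  at most (W(r)/r)^(q-1) r^q int_r^oo w(x)/x dx, because W(x)/x decreases when w does; by B1
  this is O(W(r)^q).

  Converse: test the norm equivalence (for a single q, say q = 2) on characteristic functions
  of sets of measure a, for which f**(t) = min(1, a/t). This gives
  int_a^oo W^(q-1)(t) w(t) t^(-q) dt = O((W(a)/a)^q). If W(t)/t did not halve between x and
  L x, every block (c, 4c] in that range would contribute a fixed multiple of (W(x)/x)^q to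
  this integral; hence for L = 4^m with m large, W(Lx)/(Lx) <= W(x)/(2x). Summing
  int w(t)/t dt over the blocks (L^n r, L^(n+1) r] gives the geometric bound
  int_r^oo w(t)/t dt <= 2 L W(r)/r, which is B1.
*)
theory Submission
  imports Defs "HOL-Probability.Probability_Mass_Function"
begin

lemma powr_diff_one_mult_self: "0 \<le> (x::real) \<Longrightarrow> x powr (q - 1) * x = x powr q"
  using powr_add[of x "q - 1" 1] by simp

section \<open>Integrals of weights\<close>

text \<open>A weight is only measurable on (0,oo); integrands over subsets of (0,oo) are made
  globally measurable through its extension by zero.\<close>

lemma weight_zero_extension_measurable [measurable]:
  assumes "weight w"
  shows "(\<lambda>x. indicator {0<..} x *\<^sub>R w x) \<in> borel_measurable borel"
  using assms unfolding weight_def set_borel_measurable_def by auto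

lemma weight_mult_indicator_measurable:
  assumes "weight w" and [measurable]: "h \<in> borel_measurable borel" "A \<in> sets borel"
    and "A \<subseteq> {0<..}"
  shows "(\<lambda>x. ennreal (h x * w x) * indicator A x) \<in> borel_measurable lborel"
proof -
  have "(\<lambda>x. ennreal (h x * w x) * indicator A x) =
        (\<lambda>x. ennreal (h x * (indicator {0<..} x *\<^sub>R w x)) * indicator A x)"
    using \<open>A \<subseteq> {0<..}\<close> by (auto simp: fun_eq_iff split: split_indicator)
  also have "\<dots> \<in> borel_measurable lborel"
    using \<open>weight w\<close> by measurable
  finally show ?thesis .
qed

lemma weight_indicator_measurable:
  assumes "weight w" "A \<in> sets borel" "A \<subseteq> {0<..}"
  shows "(\<lambda>x. ennreal (w x) * indicator A x) \<in> borel_measurable lborel"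
  using weight_mult_indicator_measurable[OF assms(1) _ assms(2,3), of "\<lambda>_. 1"] by simp

lemma nn_integral_Ioc_split:
  fixes g :: "real \<Rightarrow> ennreal"
  assumes "a \<le> b" "b \<le> c" and [measurable]: "(\<lambda>x. g x * indicator {a<..c} x) \<in> borel_measurable lborel"
  shows "(\<integral>\<^sup>+x\<in>{a<..c}. g x \<partial>lborel) = (\<integral>\<^sup>+x\<in>{a<..b}. g x \<partial>lborel) + (\<integral>\<^sup>+x\<in>{b<..c}. g x \<partial>lborel)"
proof -
  let ?g = "\<lambda>x. g x * indicator {a<..c} x"
  have "(\<integral>\<^sup>+x\<in>{a<..c}. g x \<partial>lborel) =
        (\<integral>\<^sup>+x. ?g x * indicator {a<..b} x + ?g x * indicator {b<..c} x \<partial>lborel)"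
    using assms(1,2) by (intro nn_integral_cong) (auto split: split_indicator)
  also have "\<dots> = (\<integral>\<^sup>+x\<in>{a<..b}. ?g x \<partial>lborel) + (\<integral>\<^sup>+x\<in>{b<..c}. ?g x \<partial>lborel)"
    by (rule nn_integral_add) auto
  also have "\<dots> = (\<integral>\<^sup>+x\<in>{a<..b}. g x \<partial>lborel) + (\<integral>\<^sup>+x\<in>{b<..c}. g x \<partial>lborel)"
    using assms(1,2) by (intro arg_cong2[where f = "(+)"] nn_integral_cong) (auto split: split_indicator)
  finally show ?thesis .
qed

lemma nn_integral_incseq_UN:
  assumes [measurable]: "f \<in> borel_measurable M" "range A \<subseteq> sets M" and "incseq A"
  shows "(\<integral>\<^sup>+x\<in>(\<Union>n. A n). f x \<partial>M) = (SUP n. \<integral>\<^sup>+x\<in>A n. f x \<partial>M)"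
proof -
  have "range A \<subseteq> sets (density M f)" using assms(2) by simp
  from SUP_emeasure_incseq[OF this \<open>incseq A\<close>] show ?thesis
    using assms(2) by (simp add: emeasure_density sets.countable_UN' subset_eq)
qed

lemma Wprim_nonpos: "t \<le> 0 \<Longrightarrow> Wprim w t = 0"
  by (simp add: Wprim_def set_lebesgue_integral_def)

lemma Wprim_nonneg:
  assumes "weight w" shows "0 \<le> Wprim w t"
  using assms unfolding Wprim_def weight_def set_lebesgue_integral_def
  by (intro Bochner_Integration.integral_nonneg) (auto split: split_indicator)

lemma ennreal_Wprim:
  assumes "weight w"
  shows "ennreal (Wprim w t) = (\<integral>\<^sup>+x\<in>{0<..t}. ennreal (w x) \<partial>lborel)"
proof (cases "t > 0")
  case True
  have "(\<integral>\<^sup>+x\<in>{0<..t}. ennreal (w x) \<partial>lborel) = (\<integral>\<^sup>+x. ennreal (indicator {0<..t} x *\<^sub>R w x) \<partial>lborel)"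
    by (intro nn_integral_cong) (auto split: split_indicator)
  also have "\<dots> = ennreal (Wprim w t)"
    using assms True unfolding Wprim_def set_lebesgue_integral_def weight_def set_integrable_def
    by (intro nn_integral_eq_integral) (auto split: split_indicator)
  finally show ?thesis ..
qed (simp add: Wprim_nonpos)

lemma
  assumes "weight w" "0 \<le> a" "a \<le> b"
  shows nn_integral_weight_Ioc: "(\<integral>\<^sup>+x\<in>{a<..b}. ennreal (w x) \<partial>lborel) = ennreal (Wprim w b - Wprim w a)"
    and Wprim_mono_nonneg: "Wprim w a \<le> Wprim w b"
proof -
  have "(\<lambda>x. ennreal (w x) * indicator {0<..b} x) \<in> borel_measurable lborel"
    by (rule weight_indicator_measurable) (use assms in auto)
  then have split: "ennreal (Wprim w b) = ennreal (Wprim w a) + (\<integral>\<^sup>+x\<in>{a<..b}. ennreal (w x) \<partial>lborel)"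
    using assms ennreal_Wprim[OF assms(1)] nn_integral_Ioc_split[OF assms(2,3)] by simp
  with Wprim_nonneg[OF assms(1)]
  show "(\<integral>\<^sup>+x\<in>{a<..b}. ennreal (w x) \<partial>lborel) = ennreal (Wprim w b - Wprim w a)"
    by (metis ennreal_add_diff_cancel_left ennreal_minus ennreal_neq_top)
  from split have "ennreal (Wprim w a) \<le> ennreal (Wprim w b)"
    by simp
  with Wprim_nonneg[OF assms(1)] show "Wprim w a \<le> Wprim w b"
    by simp
qed

lemma Wprim_mono:
  assumes "weight w" "s \<le> t" shows "Wprim w s \<le> Wprim w t"
  using assms Wprim_mono_nonneg[OF assms(1)] Wprim_nonneg[OF assms(1)] Wprim_nonpos[of s w]
  by (cases "s \<le> 0") auto

lemma borel_measurable_Wprim [measurable]: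
  assumes "weight w" shows "Wprim w \<in> borel_measurable borel"
  by (rule borel_measurable_mono) (auto simp: mono_def intro: Wprim_mono[OF assms])

lemma continuous_on_Wprim:
  assumes "weight w" shows "continuous_on {0..} (Wprim w)"
proof -
  have Icc_Ioc: "(A - B) \<union> (B - A) \<subseteq> {0}" if "{A, B} = {{0..b}, {0<..b}}" for A B and b :: real
    using that by (auto simp: doubleton_eq_iff)
  have "set_integrable lborel {0..b} w" if "0 \<le> b" for b
  proof (rule set_integrable_subset)
    show "set_integrable lborel {0..b + 1} w"
      using assms that set_integrable_discrete_difference[OF _ Icc_Ioc, where M = lborel and f = w]
      by (simp add: weight_def)
  qed (use that in auto)
  then have "continuous_on UNIV (\<lambda>b. LBINT x:{0..b}. w x)"
    by (rule continuous_on_LBINT)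
  moreover have "Wprim w b = (LBINT x:{0..b}. w x)" for b
    unfolding Wprim_def by (rule set_integral_discrete_difference[OF _ Icc_Ioc]) auto
  ultimately show ?thesis
    by (auto intro: continuous_on_subset)
qed

section \<open>Decreasing weights\<close>

lemma decreasing_weight_imp_weight: "decreasing_weight w \<Longrightarrow> weight w"
  by (simp add: decreasing_weight_def)

lemma Wprim_diff_le:
  assumes "decreasing_weight w" "0 < a" "a \<le> b"
  shows "Wprim w b - Wprim w a \<le> w a * (b - a)"
proof -
  have w: "weight w" using assms(1) by (rule decreasing_weight_imp_weight)
  have "ennreal (Wprim w b - Wprim w a) = (\<integral>\<^sup>+x\<in>{a<..b}. ennreal (w x) \<partial>lborel)"
    using nn_integral_weight_Ioc[OF w _ assms(3)] assms(2) by simp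
  also have "\<dots> \<le> (\<integral>\<^sup>+x\<in>{a<..b}. ennreal (w a) \<partial>lborel)"
    using assms(1,2) by (intro nn_integral_mono) (auto simp: decreasing_weight_def intro: ennreal_leI split: split_indicator)
  also have "\<dots> = ennreal (w a * (b - a))"
    using assms w by (simp add: nn_integral_cmult_indicator ennreal_mult weight_def)
  finally show ?thesis
    using assms w by (simp add: ennreal_le_iff weight_def)
qed

lemma mult_le_Wprim:
  assumes "decreasing_weight w" "0 < a"
  shows "a * w a \<le> Wprim w a"
proof -
  have w: "weight w" using assms(1) by (rule decreasing_weight_imp_weight)
  have "ennreal (a * w a) = (\<integral>\<^sup>+x\<in>{0<..a}. ennreal (w a) \<partial>lborel)"
    using assms w by (simp add: nn_integral_cmult_indicator ennreal_mult weight_def mult.commute)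
  also have "\<dots> \<le> (\<integral>\<^sup>+x\<in>{0<..a}. ennreal (w x) \<partial>lborel)"
    using assms(1) by (intro nn_integral_mono) (auto simp: decreasing_weight_def intro: ennreal_leI split: split_indicator)
  also have "\<dots> = ennreal (Wprim w a)"
    using ennreal_Wprim[OF w] by simp
  finally show ?thesis
    using Wprim_nonneg[OF w] by (simp add: ennreal_le_iff)
qed

lemma Wprim_div_antimono:
  assumes "decreasing_weight w" "0 < a" "a \<le> b"
  shows "Wprim w b / b \<le> Wprim w a / a"
proof -
  have "Wprim w b \<le> Wprim w a + w a * (b - a)"
    using Wprim_diff_le[OF assms] by simp
  also have "\<dots> \<le> Wprim w a + Wprim w a / a * (b - a)"
    using mult_le_Wprim[OF assms(1,2)] assms(2,3)
    by (intro add_left_mono mult_right_mono) (auto simp: field_simps)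
  also have "\<dots> = Wprim w a / a * b"
    using assms(2) by (simp add: field_simps)
  finally show ?thesis
    using assms(2,3) by (simp add: field_simps)
qed

section \<open>The weight W^(q-1) w\<close>

definition Wpow_weight :: "(real \<Rightarrow> real) \<Rightarrow> real \<Rightarrow> real \<Rightarrow> real" where
  "Wpow_weight w q t = Wprim w t powr (q - 1) * w t"

lemma Gamma1q_norm_eq_Gammaq_norm_Wpow_weight:
  "Gamma1q_norm w q f = Gammaq_norm (Wpow_weight w q) q f"
  by (simp add: Gamma1q_norm_def Gammaq_norm_def Wpow_weight_def)

lemma Gamma_spaces_eq_Wpow_weight: "Gamma_spaces_eq TYPE('a::euclidean_space) w q (Wpow_weight w q)"
  unfolding Gamma_spaces_eq_def Gamma1q_def Gammaq_def Gamma1q_norm_eq_Gammaq_norm_Wpow_weight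
  by (intro conjI exI[of _ 1]) auto

lemma weight_Wpow_weight:
  assumes w: "weight w" and q: "1 \<le> q"
  shows "weight (Wpow_weight w q)"
proof -
  have "(\<lambda>x. indicator {0<..} x *\<^sub>R Wpow_weight w q x) =
        (\<lambda>x. Wprim w x powr (q - 1) * (indicator {0<..} x *\<^sub>R w x))"
    by (auto simp: fun_eq_iff Wpow_weight_def)
  also have "\<dots> \<in> borel_measurable borel"
    using w by measurable
  finally have meas: "set_borel_measurable lborel {0<..} (Wpow_weight w q)"
    by (simp add: set_borel_measurable_def)
  have "set_integrable lborel {0<..t} (Wpow_weight w q)" if t: "t > 0" for t
  proof (rule set_integrable_bound)
    show "set_integrable lborel {0<..t} (\<lambda>x. w x * Wprim w t powr (q - 1))"
      using w t by (intro set_integrable_mult_left) (auto simp: weight_def)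
    show "set_borel_measurable lborel {0<..t} (Wpow_weight w q)"
      using meas by (rule set_borel_measurable_subset) auto
    have "\<bar>Wpow_weight w q x\<bar> \<le> \<bar>w x * Wprim w t powr (q - 1)\<bar>" if "x \<in> {0<..t}" for x
      using that w q Wprim_nonneg[OF w] Wprim_mono[OF w, of x t]
      by (auto simp: Wpow_weight_def weight_def abs_mult mult.commute
          intro!: mult_left_mono powr_mono2)
    then show "AE x in lborel. x \<in> {0<..t} \<longrightarrow> norm (Wpow_weight w q x) \<le> norm (w x * Wprim w t powr (q - 1))"
      by auto
  qed
  with meas w show ?thesis
    by (auto simp: weight_def Wpow_weight_def)
qed

lemma Wprim_Wpow_weight_le:
  assumes w: "weight w" and q: "1 \<le> q"
  shows "Wprim (Wpow_weight w q) r \<le> Wprim w r powr q"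
proof -
  have "ennreal (Wprim (Wpow_weight w q) r) = (\<integral>\<^sup>+x\<in>{0<..r}. ennreal (Wpow_weight w q x) \<partial>lborel)"
    by (rule ennreal_Wprim[OF weight_Wpow_weight[OF w q]])
  also have "\<dots> \<le> (\<integral>\<^sup>+x\<in>{0<..r}. ennreal (Wprim w r powr (q - 1)) * ennreal (w x) \<partial>lborel)"
  proof (intro nn_integral_mono)
    fix x
    have "Wpow_weight w q x \<le> Wprim w r powr (q - 1) * w x" if "x \<in> {0<..r}"
      using that w q Wprim_nonneg[OF w] Wprim_mono[OF w, of x r]
      by (auto simp: Wpow_weight_def weight_def intro!: mult_right_mono powr_mono2)
    then show "ennreal (Wpow_weight w q x) * indicator {0<..r} x \<le>
        ennreal (Wprim w r powr (q - 1)) * ennreal (w x) * indicator {0<..r} x"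
      by (auto simp: ennreal_mult'[symmetric] intro: ennreal_leI split: split_indicator)
  qed
  also have "\<dots> = ennreal (Wprim w r powr (q - 1)) * (\<integral>\<^sup>+x\<in>{0<..r}. ennreal (w x) \<partial>lborel)"
  proof -
    have "(\<lambda>x. ennreal (w x) * indicator {0<..r} x) \<in> borel_measurable lborel"
      by (rule weight_indicator_measurable[OF w]) auto
    then show ?thesis
      by (simp add: mult.assoc nn_integral_cmult)
  qed
  also have "\<dots> = ennreal (Wprim w r powr q)"
    using ennreal_Wprim[OF w, of r, symmetric] Wprim_nonneg[OF w, of r]
    by (simp add: ennreal_mult'[symmetric] powr_diff_one_mult_self)
  finally show ?thesis
    by (simp add: ennreal_le_iff)
qed

lemma Wprim_powr_le_Wprim_Wpow_weight:
  assumes w: "weight w" and q: "1 \<le> q"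
  shows "Wprim w r powr q \<le> 2 powr q * Wprim (Wpow_weight w q) r"
proof (cases "0 < r")
  case False
  then show ?thesis by (simp add: Wprim_nonpos)
next
  case True
  let ?u = "Wpow_weight w q"
  have "continuous_on {0..r} (Wprim w)"
    using continuous_on_Wprim[OF w] by (rule continuous_on_subset) auto
  then obtain s where s: "0 \<le> s" "s \<le> r" "Wprim w s = Wprim w r / 2"
    using IVT'[of "Wprim w" 0 "Wprim w r / 2" r] True Wprim_nonneg[OF w, of r] by (auto simp: Wprim_nonpos)
  have "(Wprim w r / 2) powr q = Wprim w s powr (q - 1) * (Wprim w r - Wprim w s)"
  proof -
    have "Wprim w r / 2 = Wprim w s" "Wprim w r - Wprim w s = Wprim w s"
      using s(3) by simp_all
    then show ?thesis
      using powr_diff_one_mult_self[OF Wprim_nonneg[OF w], of s q] by simp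
  qed
  then have "ennreal ((Wprim w r / 2) powr q) = ennreal (Wprim w s powr (q - 1)) * ennreal (Wprim w r - Wprim w s)"
    by (simp add: ennreal_mult')
  also have "\<dots> = (\<integral>\<^sup>+x\<in>{s<..r}. ennreal (Wprim w s powr (q - 1)) * ennreal (w x) \<partial>lborel)"
  proof -
    have "(\<lambda>x. ennreal (w x) * indicator {s<..r} x) \<in> borel_measurable lborel"
      by (rule weight_indicator_measurable[OF w]) (use s in auto)
    then show ?thesis
      using nn_integral_weight_Ioc[OF w s(1,2)] by (simp add: mult.assoc nn_integral_cmult)
  qed
  also have "\<dots> \<le> (\<integral>\<^sup>+x\<in>{0<..r}. ennreal (?u x) \<partial>lborel)"
  proof (intro nn_integral_mono)
    fix x
    have "Wprim w s powr (q - 1) * w x \<le> ?u x" if "x \<in> {s<..r}"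
      using that s w q Wprim_nonneg[OF w] Wprim_mono[OF w, of s x]
      by (auto simp: Wpow_weight_def weight_def intro!: mult_right_mono powr_mono2)
    then show "ennreal (Wprim w s powr (q - 1)) * ennreal (w x) * indicator {s<..r} x \<le>
        ennreal (?u x) * indicator {0<..r} x"
      using s(1,2) by (auto simp: ennreal_mult'[symmetric] intro: ennreal_leI split: split_indicator)
  qed
  also have "\<dots> = ennreal (Wprim ?u r)"
    using ennreal_Wprim[OF weight_Wpow_weight[OF w q]] by simp
  finally have "(Wprim w r / 2) powr q \<le> Wprim ?u r"
    using Wprim_nonneg[OF weight_Wpow_weight[OF w q]] by (simp add: ennreal_le_iff)
  then show ?thesis
    using Wprim_nonneg[OF w, of r] by (simp add: powr_divide field_simps)
qed

lemma nn_integral_Wpow_weight_tail_le: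
  assumes dw: "decreasing_weight w" and q: "1 \<le> q" and r: "0 < r"
  shows "(\<integral>\<^sup>+x\<in>{r<..}. ennreal (Wpow_weight w q x * x powr - q) \<partial>lborel) \<le>
    ennreal ((Wprim w r / r) powr (q - 1)) * (\<integral>\<^sup>+x\<in>{r<..}. ennreal (w x / x) \<partial>lborel)"
proof -
  have w: "weight w" using dw by (rule decreasing_weight_imp_weight)
  have "Wpow_weight w q x * x powr - q \<le> (Wprim w r / r) powr (q - 1) * (w x / x)" if x: "r < x" for x
  proof -
    have "Wpow_weight w q x * x powr - q = (Wprim w x / x) powr (q - 1) * (w x / x)"
      using x r Wprim_nonneg[OF w, of x] powr_diff_one_mult_self[of x q]
      by (simp add: Wpow_weight_def powr_divide powr_minus field_simps)
    also have "\<dots> \<le> (Wprim w r / r) powr (q - 1) * (w x / x)"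
      using x r q w Wprim_nonneg[OF w, of x] Wprim_div_antimono[OF dw r, of x]
      by (intro mult_right_mono powr_mono2) (auto simp: weight_def)
    finally show ?thesis .
  qed
  then have "(\<integral>\<^sup>+x\<in>{r<..}. ennreal (Wpow_weight w q x * x powr - q) \<partial>lborel) \<le>
      (\<integral>\<^sup>+x\<in>{r<..}. ennreal ((Wprim w r / r) powr (q - 1)) * ennreal (w x / x) \<partial>lborel)"
    by (intro nn_integral_mono) (auto simp: ennreal_mult'[symmetric] intro: ennreal_leI split: split_indicator)
  also have "\<dots> = ennreal ((Wprim w r / r) powr (q - 1)) * (\<integral>\<^sup>+x\<in>{r<..}. ennreal (w x / x) \<partial>lborel)"
  proof -
    have "(\<lambda>x. ennreal (1 / x * w x) * indicator {r<..} x) \<in> borel_measurable lborel"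
      by (rule weight_mult_indicator_measurable[OF w]) (use r in auto)
    then show ?thesis
      by (simp add: mult.assoc nn_integral_cmult)
  qed
  finally show ?thesis .
qed

lemma Wpow_weight_tail_bound_of_B1:
  assumes dw: "decreasing_weight w" and "B1 w" and q: "1 \<le> q"
  obtains B where "0 \<le> B" and "\<And>r. 0 < r \<Longrightarrow>
    ennreal (r powr q) * (\<integral>\<^sup>+x\<in>{r<..}. ennreal (Wpow_weight w q x * x powr - q) \<partial>lborel) \<le>
    ennreal (B * Wprim w r powr q)"
proof -
  have w: "weight w" using dw by (rule decreasing_weight_imp_weight)
  obtain C where C: "\<And>r. 0 < r \<Longrightarrow> (\<integral>\<^sup>+x\<in>{r<..}. ennreal (w x / x) \<partial>lborel) \<le> ennreal (C / r * Wprim w r)"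
    using \<open>B1 w\<close> unfolding B1_def by blast
  define B where "B = max C 0"
  have "ennreal (r powr q) * (\<integral>\<^sup>+x\<in>{r<..}. ennreal (Wpow_weight w q x * x powr - q) \<partial>lborel) \<le>
      ennreal (B * Wprim w r powr q)" if r: "0 < r" for r
  proof -
    have "C / r * Wprim w r \<le> B / r * Wprim w r"
      using r Wprim_nonneg[OF w, of r] by (intro mult_right_mono divide_right_mono) (auto simp: B_def)
    then have "(\<integral>\<^sup>+x\<in>{r<..}. ennreal (w x / x) \<partial>lborel) \<le> ennreal (B / r * Wprim w r)"
      using C[OF r] by (meson ennreal_leI order.trans)
    then have "ennreal (r powr q) * (\<integral>\<^sup>+x\<in>{r<..}. ennreal (Wpow_weight w q x * x powr - q) \<partial>lborel) \<le>
        ennreal (r powr q) * (ennreal ((Wprim w r / r) powr (q - 1)) * ennreal (B / r * Wprim w r))"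
      using order.trans[OF nn_integral_Wpow_weight_tail_le[OF dw q r] mult_left_mono]
      by (intro mult_left_mono) auto
    also have "\<dots> = ennreal (B * Wprim w r powr q)"
    proof -
      have "r powr q = r powr (q - 1) * r" "Wprim w r powr q = Wprim w r powr (q - 1) * Wprim w r"
        using r Wprim_nonneg[OF w, of r] by (simp_all add: powr_diff_one_mult_self)
      then have "r powr q * ((Wprim w r / r) powr (q - 1) * (B / r * Wprim w r)) = B * Wprim w r powr q"
        using r Wprim_nonneg[OF w, of r] by (simp add: powr_divide)
      then show ?thesis
        using r Wprim_nonneg[OF w, of r] by (simp add: B_def ennreal_mult'[symmetric])
    qed
    finally show ?thesis .
  qed
  moreover have "0 \<le> B"
    by (simp add: B_def)
  ultimately show ?thesis
    using that by blast
qed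

lemma level_equiv_Wpow_weight:
  assumes dw: "decreasing_weight w" and "B1 w" and q: "1 \<le> q"
  shows "level_equiv w q (Wpow_weight w q)"
proof -
  have w: "weight w" using dw by (rule decreasing_weight_imp_weight)
  obtain B where B: "0 \<le> B" and tail: "\<And>r. 0 < r \<Longrightarrow>
      ennreal (r powr q) * (\<integral>\<^sup>+x\<in>{r<..}. ennreal (Wpow_weight w q x * x powr - q) \<partial>lborel) \<le>
      ennreal (B * Wprim w r powr q)"
    using Wpow_weight_tail_bound_of_B1[OF assms] by blast
  let ?u = "Wpow_weight w q"
  let ?S = "\<lambda>r. ennreal (Wprim ?u r) + ennreal (r powr q) * (\<integral>\<^sup>+x\<in>{r<..}. ennreal (?u x * x powr - q) \<partial>lborel)"
  have "ennreal (1 / (1 + B)) * ?S r \<le> ennreal (Wprim w r powr q)" if r: "0 < r" for r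
  proof -
    have "?S r \<le> ennreal (Wprim w r powr q) + ennreal (B * Wprim w r powr q)"
      using Wprim_Wpow_weight_le[OF w q, of r] tail[OF r] by (intro add_mono ennreal_leI)
    also have "\<dots> = ennreal ((1 + B) * Wprim w r powr q)"
      using B by (simp add: distrib_right ennreal_plus[symmetric] del: ennreal_plus)
    finally have "ennreal (1 / (1 + B)) * ?S r \<le> ennreal (1 / (1 + B)) * ennreal ((1 + B) * Wprim w r powr q)"
      by (rule mult_left_mono) simp
    also have "\<dots> = ennreal (Wprim w r powr q)"
      using B by (simp add: ennreal_mult'[symmetric])
    finally show ?thesis .
  qed
  moreover have "ennreal (Wprim w r powr q) \<le> ennreal (2 powr q) * ?S r" for r
  proof -
    have "ennreal (Wprim w r powr q) \<le> ennreal (2 powr q) * ennreal (Wprim ?u r)"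
      using Wprim_powr_le_Wprim_Wpow_weight[OF w q, of r] by (simp add: ennreal_mult'[symmetric] ennreal_leI)
    also have "\<dots> \<le> ennreal (2 powr q) * ?S r"
      by (intro mult_left_mono) auto
    finally show ?thesis .
  qed
  ultimately show ?thesis
    unfolding level_equiv_def using B
    by (intro exI[of _ "1 / (1 + B)"] exI[of _ "2 powr q"]) auto
qed

section \<open>Characteristic functions as test functions\<close>

lemma exists_borel_set_with_measure:
  assumes a: "0 < a"
  shows "\<exists>S::'a::euclidean_space set. S \<in> sets borel \<and> emeasure lebesgue S = ennreal a"
proof -
  define l where "l = a powr (1 / DIM('a))"
  have l: "0 < l" using a by (simp add: l_def)
  have "emeasure lborel (cbox 0 (l *\<^sub>R One :: 'a)) = ennreal (l ^ DIM('a))"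
    using l by (simp add: emeasure_lborel_cbox_eq prod_ennreal[symmetric] ennreal_power inner_Basis)
  also have "l ^ DIM('a) = a"
    using a l by (simp add: l_def powr_realpow[symmetric] powr_powr)
  finally show ?thesis
    by (intro exI[of _ "cbox 0 (l *\<^sub>R One)"]) simp
qed

lemma drearr_indicator:
  assumes "emeasure lebesgue S = ennreal a" "0 < a"
  shows "drearr (indicator S :: 'a::euclidean_space \<Rightarrow> real) s = (if s < a then 1 else 0)"
proof -
  have level_set: "{x. \<sigma> < ennreal \<bar>indicator S x :: real\<bar>} = (if \<sigma> < 1 then S else {})" for \<sigma>
    by (auto split: split_indicator)
  show ?thesis
  proof (cases "s < a")
    case True
    then have "\<not> ennreal a \<le> ennreal s"
      using assms(2) by (cases "0 \<le> s") (auto simp: ennreal_le_iff2 ennreal_neg)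
    then have "{\<sigma>. emeasure lebesgue {x. \<sigma> < ennreal \<bar>indicator S x :: real\<bar>} \<le> ennreal s} = {1..}"
      unfolding level_set using assms(1) by (auto simp: not_less)
    then show ?thesis
      using True by (simp add: drearr_def)
  next
    case False
    then have "{\<sigma>. emeasure lebesgue {x. \<sigma> < ennreal \<bar>indicator S x :: real\<bar>} \<le> ennreal s} = UNIV"
      unfolding level_set using assms(1) by (auto intro: ennreal_leI)
    then show ?thesis
      using False by (simp add: drearr_def bot_ennreal)
  qed
qed

lemma dmax_indicator:
  assumes "emeasure lebesgue S = ennreal a" "0 < a" "0 < t"
  shows "dmax (indicator S :: 'a::euclidean_space \<Rightarrow> real) t = ennreal (min t a / t)"
proof -
  have "(\<integral>\<^sup>+s\<in>{0<..<t}. drearr (indicator S :: 'a \<Rightarrow> real) s \<partial>lborel) = (\<integral>\<^sup>+s. indicator {0<..<min t a} s \<partial>lborel)"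
    by (intro nn_integral_cong) (auto simp: drearr_indicator[OF assms(1,2)] split: split_indicator)
  then show ?thesis
    using assms(2,3) by (simp add: dmax_def ennreal_mult'[symmetric])
qed

lemma nn_integral_dmax_indicator_powr:
  assumes u: "weight u" and S: "emeasure lebesgue S = ennreal a" and a: "0 < a"
  shows "(\<integral>\<^sup>+t\<in>{0<..}. enn_powr (dmax (indicator S :: 'a::euclidean_space \<Rightarrow> real) t) q * ennreal (u t) \<partial>lborel) =
    ennreal (Wprim u a) + ennreal (a powr q) * (\<integral>\<^sup>+x\<in>{a<..}. ennreal (u x * x powr - q) \<partial>lborel)"
proof -
  have "enn_powr (dmax (indicator S :: 'a \<Rightarrow> real) t) q * ennreal (u t) * indicator {0<..} t =
      ennreal (u t) * indicator {0<..a} t + ennreal (a powr q) * (ennreal (u t * t powr - q) * indicator {a<..} t)" for t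
  proof (cases "0 < t")
    case True
    then have "enn_powr (dmax (indicator S :: 'a \<Rightarrow> real) t) q = ennreal ((min t a / t) powr q)"
      using dmax_indicator[OF S a True] a True by (simp add: enn_powr_def)
    moreover have "(a / t) powr q * u t = a powr q * (u t * t powr - q)" if "a < t"
      using a True by (simp add: powr_divide powr_minus_divide)
    ultimately show ?thesis
      using True a u by (auto simp: ennreal_mult'[symmetric] weight_def split: split_indicator)
  next
    case False
    then have "t \<notin> {0<..}" "t \<notin> {0<..a}" "t \<notin> {a<..}"
      using a by auto
    then show ?thesis
      by simp
  qed
  then have "(\<integral>\<^sup>+t\<in>{0<..}. enn_powr (dmax (indicator S :: 'a \<Rightarrow> real) t) q * ennreal (u t) \<partial>lborel) =
      (\<integral>\<^sup>+t. ennreal (u t) * indicator {0<..a} t + ennreal (a powr q) * (ennreal (u t * t powr - q) * indicator {a<..} t) \<partial>lborel)"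
    by simp
  also have "\<dots> = (\<integral>\<^sup>+t\<in>{0<..a}. ennreal (u t) \<partial>lborel) +
      ennreal (a powr q) * (\<integral>\<^sup>+t\<in>{a<..}. ennreal (u t * t powr - q) \<partial>lborel)"
  proof -
    have m1: "(\<lambda>t. ennreal (u t) * indicator {0<..a} t) \<in> borel_measurable lborel"
      by (rule weight_indicator_measurable[OF u]) auto
    have "(\<lambda>t. ennreal (t powr - q * u t) * indicator {a<..} t) \<in> borel_measurable lborel"
      by (rule weight_mult_indicator_measurable[OF u]) (use a in auto)
    then have m2: "(\<lambda>t. ennreal (u t * t powr - q) * indicator {a<..} t) \<in> borel_measurable lborel"
      by (simp only: mult.commute)
    show ?thesis
      using m1 m2 by (simp add: nn_integral_add nn_integral_cmult)
  qed
  finally show ?thesis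
    using ennreal_Wprim[OF u] by simp
qed

lemma le_cmult_of_enn_powr_le:
  assumes le: "enn_powr X (1 / q) \<le> ennreal C * enn_powr Y (1 / q)" and Y: "Y \<noteq> \<infinity>"
    and q: "0 < q" and C: "0 \<le> C"
  shows "X \<le> ennreal (C powr q) * Y"
proof -
  obtain y where y: "Y = ennreal y" "0 \<le> y" using Y by (cases Y) auto
  have "X \<noteq> \<infinity>"
    using le y by (auto simp: enn_powr_def ennreal_mult'[symmetric] C top_unique)
  then obtain x where x: "X = ennreal x" "0 \<le> x" by (cases X) auto
  have "x powr (1 / q) \<le> C * y powr (1 / q)"
    using le x y C by (simp add: enn_powr_def ennreal_mult'[symmetric])
  then have "(x powr (1 / q)) powr q \<le> (C * y powr (1 / q)) powr q"
    using q by (intro powr_mono2) auto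
  then have "x \<le> C powr q * y"
    using x y q C by (simp add: powr_powr powr_mult)
  then show ?thesis
    using x y C by (simp add: ennreal_mult'[symmetric] ennreal_leI)
qed

lemma Gamma_spaces_eq_nn_integral_le:
  assumes "Gamma_spaces_eq TYPE('a::euclidean_space) w q u" and q: "0 < q"
  obtains C where "0 \<le> C" and "\<And>f::'a \<Rightarrow> real. f \<in> borel_measurable lebesgue \<Longrightarrow>
      (\<integral>\<^sup>+t\<in>{0<..}. enn_powr (dmax f t) q * ennreal (u t) \<partial>lborel) \<noteq> \<infinity> \<Longrightarrow>
      (\<integral>\<^sup>+t\<in>{0<..}. enn_powr (dmax f t) q * ennreal (Wpow_weight w q t) \<partial>lborel) \<le>
      ennreal C * (\<integral>\<^sup>+t\<in>{0<..}. enn_powr (dmax f t) q * ennreal (u t) \<partial>lborel)"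
proof -
  obtain C where C: "0 < C" and spaces: "(Gamma1q w q :: ('a \<Rightarrow> real) set) = Gammaq u q"
    and norms: "\<And>f::'a \<Rightarrow> real. f \<in> Gamma1q w q \<Longrightarrow> Gamma1q_norm w q f \<le> ennreal C * Gammaq_norm u q f"
    using assms(1) unfolding Gamma_spaces_eq_def by blast
  have "(\<integral>\<^sup>+t\<in>{0<..}. enn_powr (dmax f t) q * ennreal (Wpow_weight w q t) \<partial>lborel) \<le>
      ennreal (C powr q) * (\<integral>\<^sup>+t\<in>{0<..}. enn_powr (dmax f t) q * ennreal (u t) \<partial>lborel)"
    if "f \<in> borel_measurable lebesgue"
      and fin: "(\<integral>\<^sup>+t\<in>{0<..}. enn_powr (dmax f t) q * ennreal (u t) \<partial>lborel) \<noteq> \<infinity>"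
    for f :: "'a \<Rightarrow> real"
  proof -
    have "f \<in> Gammaq u q"
      using that by (simp add: Gammaq_def Gammaq_norm_def enn_powr_def)
    then have "Gamma1q_norm w q f \<le> ennreal C * Gammaq_norm u q f"
      using spaces norms by simp
    then show ?thesis
      using fin q C
      by (intro le_cmult_of_enn_powr_le) (auto simp: Gamma1q_norm_eq_Gammaq_norm_Wpow_weight Gammaq_norm_def)
  qed
  then show ?thesis
    using that[of "C powr q"] by simp
qed

lemma Wpow_weight_tail_bound_of_Gamma_spaces_eq:
  assumes w: "weight w" and u: "weight u" and q: "1 \<le> q"
    and "level_equiv w q u" and "Gamma_spaces_eq TYPE('a::euclidean_space) w q u"
  obtains K where "0 \<le> K" and "\<And>a. 0 < a \<Longrightarrow>
    ennreal (a powr q) * (\<integral>\<^sup>+x\<in>{a<..}. ennreal (Wpow_weight w q x * x powr - q) \<partial>lborel) \<le>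
    ennreal (K * Wprim w a powr q)"
proof -
  obtain c where c: "0 < c" and lower: "\<And>r. 0 < r \<Longrightarrow> ennreal c * (ennreal (Wprim u r) + ennreal (r powr q) *
      (\<integral>\<^sup>+x\<in>{r<..}. ennreal (u x * x powr - q) \<partial>lborel)) \<le> ennreal (Wprim w r powr q)"
    using \<open>level_equiv w q u\<close> unfolding level_equiv_def by blast
  obtain C where C: "0 \<le> C" and norms: "\<And>f::'a \<Rightarrow> real. f \<in> borel_measurable lebesgue \<Longrightarrow>
      (\<integral>\<^sup>+t\<in>{0<..}. enn_powr (dmax f t) q * ennreal (u t) \<partial>lborel) \<noteq> \<infinity> \<Longrightarrow>
      (\<integral>\<^sup>+t\<in>{0<..}. enn_powr (dmax f t) q * ennreal (Wpow_weight w q t) \<partial>lborel) \<le>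
      ennreal C * (\<integral>\<^sup>+t\<in>{0<..}. enn_powr (dmax f t) q * ennreal (u t) \<partial>lborel)"
    using Gamma_spaces_eq_nn_integral_le[OF assms(5)] q by auto
  have "ennreal (a powr q) * (\<integral>\<^sup>+x\<in>{a<..}. ennreal (Wpow_weight w q x * x powr - q) \<partial>lborel) \<le>
      ennreal (C / c * Wprim w a powr q)" if a: "0 < a" for a
  proof -
    obtain S :: "'a set" where S: "S \<in> sets borel" "emeasure lebesgue S = ennreal a"
      using exists_borel_set_with_measure[OF a] by blast
    define I where "I v = (\<integral>\<^sup>+t\<in>{0<..}. enn_powr (dmax (indicator S :: 'a \<Rightarrow> real) t) q * ennreal (v t) \<partial>lborel)"
      for v
    have Iu: "ennreal c * I u \<le> ennreal (Wprim w a powr q)"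
      using lower[OF a] nn_integral_dmax_indicator_powr[OF u S(2) a] by (simp add: I_def)
    then have "I u \<noteq> \<infinity>"
      using c by (auto simp: ennreal_mult_eq_top_iff top_unique)
    moreover have "indicator S \<in> borel_measurable lebesgue"
      using S(1) by (intro borel_measurable_indicator) auto
    ultimately have Iw: "I (Wpow_weight w q) \<le> ennreal C * I u"
      using norms unfolding I_def by blast
    have "ennreal (a powr q) * (\<integral>\<^sup>+x\<in>{a<..}. ennreal (Wpow_weight w q x * x powr - q) \<partial>lborel) \<le>
        I (Wpow_weight w q)"
      unfolding I_def nn_integral_dmax_indicator_powr[OF weight_Wpow_weight[OF w q] S(2) a]
      by (rule add_increasing) auto
    also note Iw
    also have "ennreal C * I u \<le> ennreal C * (ennreal (1 / c) * ennreal (Wprim w a powr q))"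
    proof (intro mult_left_mono)
      have "I u = ennreal (1 / c) * (ennreal c * I u)"
        using c by (simp add: mult.assoc[symmetric] ennreal_mult'[symmetric])
      then show "I u \<le> ennreal (1 / c) * ennreal (Wprim w a powr q)"
        using Iu by (metis mult_left_mono zero_le)
    qed simp
    also have "\<dots> = ennreal (C / c * Wprim w a powr q)"
      using c C by (simp add: ennreal_mult'[symmetric])
    finally show ?thesis .
  qed
  moreover have "0 \<le> C / c"
    using c C by simp
  ultimately show ?thesis
    using that by blast
qed

section \<open>From a tail bound to B1\<close>

lemma Wprim_bounds_of_slow_decay:
  assumes dw: "decreasing_weight w" and a: "0 < a" and "a \<le> c" "4 * c \<le> b"
    and gap: "Wprim w a / a / 2 < Wprim w b / b"
  shows "c * (Wprim w a / a) / 2 \<le> Wprim w c"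
    and "c * (Wprim w a / a) \<le> Wprim w (4 * c) - Wprim w c"
proof -
  define V where "V x = Wprim w x / x" for x
  have c: "0 < c" using a \<open>a \<le> c\<close> by simp
  have V_anti: "V y \<le> V x" if "0 < x" "x \<le> y" for x y
    using Wprim_div_antimono[OF dw that] by (simp add: V_def)
  have gap': "V a / 2 < V b" using gap by (simp add: V_def)
  have "c * (V a / 2) \<le> c * V c" "4 * c * (V a / 2) \<le> 4 * c * V (4 * c)" "c * V c \<le> c * V a"
    using V_anti[of c b] V_anti[of "4 * c" b] V_anti[of a c] gap' c a assms(3,4)
    by (intro mult_left_mono; simp)+
  moreover have "Wprim w c = c * V c" "Wprim w (4 * c) = 4 * c * V (4 * c)"
    using c by (simp_all add: V_def)
  ultimately have "c * V a / 2 \<le> Wprim w c" "c * V a \<le> Wprim w (4 * c) - Wprim w c"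
    by simp_all
  then show "c * (Wprim w a / a) / 2 \<le> Wprim w c" "c * (Wprim w a / a) \<le> Wprim w (4 * c) - Wprim w c"
    unfolding V_def .
qed

lemma nn_integral_Wpow_weight_block_ge:
  assumes dw: "decreasing_weight w" and q: "1 \<le> q" and a: "0 < a" and "a \<le> c" "4 * c \<le> b"
    and gap: "Wprim w a / a / 2 < Wprim w b / b"
  shows "ennreal (2 * (Wprim w a / (8 * a)) powr q) \<le>
    (\<integral>\<^sup>+t\<in>{c<..4 * c}. ennreal (Wpow_weight w q t * t powr - q) \<partial>lborel)"
proof -
  have w: "weight w" using dw by (rule decreasing_weight_imp_weight)
  have c: "0 < c" using a \<open>a \<le> c\<close> by simp
  define X where "X = c * (Wprim w a / a) / 2"
  have X: "0 \<le> X" using c a Wprim_nonneg[OF w, of a] by (simp add: X_def)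
  have low: "X \<le> Wprim w c" and incr: "2 * X \<le> Wprim w (4 * c) - Wprim w c"
    using Wprim_bounds_of_slow_decay[OF dw a assms(4,5) gap] by (simp_all add: X_def)
  define \<beta> where "\<beta> = X powr (q - 1) * (4 * c) powr - q"
  have pointwise: "\<beta> * w t \<le> Wpow_weight w q t * t powr - q" if t: "c < t" "t \<le> 4 * c" for t
  proof -
    have "X powr (q - 1) \<le> Wprim w t powr (q - 1)"
      using low Wprim_mono[OF w, of c t] t q X by (intro powr_mono2) auto
    moreover have "(4 * c) powr - q \<le> t powr - q"
      using t c q by (intro powr_mono2') auto
    moreover have "0 \<le> w t"
      using t c w by (simp add: weight_def)
    ultimately have "X powr (q - 1) * w t * (4 * c) powr - q \<le> Wprim w t powr (q - 1) * w t * t powr - q"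
      by (intro mult_mono mult_right_mono) auto
    then show ?thesis
      by (simp add: \<beta>_def Wpow_weight_def mult_ac)
  qed
  have "Wprim w a / (8 * a) = X / (4 * c)"
    using c a by (simp add: X_def field_simps)
  then have "2 * (Wprim w a / (8 * a)) powr q = \<beta> * (2 * X)"
    using powr_diff_one_mult_self[OF X, of q] by (simp add: \<beta>_def powr_divide powr_minus_divide)
  also have "\<dots> \<le> \<beta> * (Wprim w (4 * c) - Wprim w c)"
    using incr by (intro mult_left_mono) (auto simp: \<beta>_def)
  finally have "ennreal (2 * (Wprim w a / (8 * a)) powr q) \<le> ennreal (\<beta> * (Wprim w (4 * c) - Wprim w c))"
    by (rule ennreal_leI)
  also have "\<dots> = (\<integral>\<^sup>+t\<in>{c<..4 * c}. ennreal \<beta> * ennreal (w t) \<partial>lborel)"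
  proof -
    have "(\<lambda>x. ennreal (w x) * indicator {c<..4 * c} x) \<in> borel_measurable lborel"
      by (rule weight_indicator_measurable[OF w]) (use c in auto)
    then show ?thesis
      using nn_integral_weight_Ioc[OF w, of c "4 * c"] c
      by (simp add: mult.assoc nn_integral_cmult ennreal_mult' \<beta>_def)
  qed
  also have "\<dots> \<le> (\<integral>\<^sup>+t\<in>{c<..4 * c}. ennreal (Wpow_weight w q t * t powr - q) \<partial>lborel)"
    using pointwise
    by (intro nn_integral_mono) (auto simp: \<beta>_def ennreal_mult'[symmetric] intro: ennreal_leI split: split_indicator)
  finally show ?thesis .
qed

lemma nn_integral_Wpow_weight_blocks_ge:
  assumes dw: "decreasing_weight w" and q: "1 \<le> q" and a: "0 < a" and "4 ^ n * a \<le> b"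
    and gap: "Wprim w a / a / 2 < Wprim w b / b"
  shows "ennreal (real n * (2 * (Wprim w a / (8 * a)) powr q)) \<le>
    (\<integral>\<^sup>+t\<in>{a<..4 ^ n * a}. ennreal (Wpow_weight w q t * t powr - q) \<partial>lborel)"
  using \<open>4 ^ n * a \<le> b\<close>
proof (induction n)
  case (Suc n)
  define \<beta> where "\<beta> = 2 * (Wprim w a / (8 * a)) powr q"
  define g where "g t = ennreal (Wpow_weight w q t * t powr - q)" for t
  have "(\<lambda>t. ennreal (t powr - q * Wpow_weight w q t) * indicator {a<..4 ^ Suc n * a} t) \<in> borel_measurable lborel"
    by (rule weight_mult_indicator_measurable[OF weight_Wpow_weight[OF decreasing_weight_imp_weight[OF dw] q]])
      (use a in auto)
  then have g_meas: "(\<lambda>t. g t * indicator {a<..4 ^ Suc n * a} t) \<in> borel_measurable lborel"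
    by (simp add: g_def mult.commute)
  have "4 ^ n * a \<le> 4 ^ Suc n * a"
    using a by simp
  then have "ennreal (real n * \<beta>) \<le> (\<integral>\<^sup>+t\<in>{a<..4 ^ n * a}. g t \<partial>lborel)"
    using Suc.IH Suc.prems by (simp add: \<beta>_def g_def del: power_Suc)
  moreover have "ennreal \<beta> \<le> (\<integral>\<^sup>+t\<in>{4 ^ n * a<..4 ^ Suc n * a}. g t \<partial>lborel)"
    using nn_integral_Wpow_weight_block_ge[OF dw q a _ _ gap, of "4 ^ n * a"] Suc.prems a
    by (simp add: \<beta>_def g_def mult.assoc)
  ultimately have "ennreal (real n * \<beta>) + ennreal \<beta> \<le> (\<integral>\<^sup>+t\<in>{a<..4 ^ Suc n * a}. g t \<partial>lborel)"
    using nn_integral_Ioc_split[OF _ \<open>4 ^ n * a \<le> 4 ^ Suc n * a\<close> g_meas] a by (simp add: add_mono)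
  moreover have "ennreal (real (Suc n) * \<beta>) = ennreal (real n * \<beta>) + ennreal \<beta>"
    by (simp add: \<beta>_def algebra_simps ennreal_plus[symmetric] del: ennreal_plus)
  ultimately show ?case
    by (simp add: \<beta>_def g_def)
qed simp

lemma Wprim_div_halves_of_tail_bound:
  assumes dw: "decreasing_weight w" and q: "1 \<le> q" and K: "0 \<le> K"
    and tail: "\<And>a. 0 < a \<Longrightarrow>
      ennreal (a powr q) * (\<integral>\<^sup>+x\<in>{a<..}. ennreal (Wpow_weight w q x * x powr - q) \<partial>lborel) \<le>
      ennreal (K * Wprim w a powr q)"
  obtains L where "1 < L" "\<And>x. 0 < x \<Longrightarrow> Wprim w (L * x) / (L * x) \<le> Wprim w x / x / 2"
proof -
  have w: "weight w" using dw by (rule decreasing_weight_imp_weight)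
  define m where "m = nat \<lceil>K * 8 powr q\<rceil> + 1"
  define L where "L = (4::real) ^ m"
  have "1 < L" unfolding L_def m_def by (rule one_less_power) auto
  moreover have "Wprim w (L * x) / (L * x) \<le> Wprim w x / x / 2" if x: "0 < x" for x
  proof (rule ccontr)
    assume "\<not> ?thesis"
    then have gap: "Wprim w x / x / 2 < Wprim w (L * x) / (L * x)" by simp
    define \<beta> where "\<beta> = 2 * (Wprim w x / (8 * x)) powr q"
    have "ennreal (real m * \<beta>) \<le> (\<integral>\<^sup>+t\<in>{x<..}. ennreal (Wpow_weight w q t * t powr - q) \<partial>lborel)"
      using nn_integral_Wpow_weight_blocks_ge[OF dw q x _ gap, of m]
      by (simp add: L_def \<beta>_def) (erule order.trans, rule nn_set_integral_set_mono, auto)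
    then have "ennreal (x powr q) * ennreal (real m * \<beta>) \<le> ennreal (K * Wprim w x powr q)"
      using tail[OF x] by (meson mult_left_mono order.trans zero_le)
    then have "ennreal (x powr q * (real m * \<beta>)) \<le> ennreal (K * Wprim w x powr q)"
      by (simp add: ennreal_mult')
    then have "real m * (x powr q * \<beta>) \<le> K * Wprim w x powr q"
      using K by (simp add: ennreal_le_iff mult.left_commute)
    moreover have "x powr q * \<beta> = 2 * Wprim w x powr q / 8 powr q"
      using x Wprim_nonneg[OF w, of x] by (simp add: \<beta>_def powr_divide powr_mult)
    moreover have "0 < Wprim w x"
    proof -
      have "L * Wprim w x < 2 * Wprim w (L * x)" "Wprim w (L * x) \<le> L * Wprim w x"
        using gap Wprim_div_antimono[OF dw x, of "L * x"] \<open>1 < L\<close> x by (simp_all add: field_simps)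
      then have "0 < L * Wprim w x" by linarith
      then show ?thesis using \<open>1 < L\<close> by (simp add: zero_less_mult_iff)
    qed
    ultimately have "(real m * 2) * (Wprim w x powr q / 8 powr q) \<le> (K * 8 powr q) * (Wprim w x powr q / 8 powr q)"
      by simp
    then have "real m * 2 \<le> K * 8 powr q"
      by (rule mult_right_le_imp_le) (use \<open>0 < Wprim w x\<close> in simp)
    then show False
      by (simp add: m_def) linarith
  qed
  ultimately show ?thesis
    by (rule that)
qed

lemma nn_integral_Ioi_eq_SUP_power:
  fixes f :: "real \<Rightarrow> ennreal"
  assumes f: "f \<in> borel_measurable lborel" and L: "1 < L" and r: "0 < r"
  shows "(\<integral>\<^sup>+t\<in>{r<..}. f t \<partial>lborel) = (SUP n. \<integral>\<^sup>+t\<in>{r<..L ^ n * r}. f t \<partial>lborel)"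
proof -
  have "(\<Union>n. {r<..L ^ n * r}) = {r<..}"
  proof (intro equalityI subsetI)
    fix t assume "t \<in> {r<..}"
    moreover obtain n where "t / r < L ^ n"
      using real_arch_pow[OF L] by blast
    ultimately show "t \<in> (\<Union>n. {r<..L ^ n * r})"
      using r by (auto simp: field_simps intro!: less_imp_le)
  qed auto
  moreover have "incseq (\<lambda>n. {r<..L ^ n * r})"
  proof (intro monoI)
    fix m n :: nat
    assume "m \<le> n"
    then have "L ^ m * r \<le> L ^ n * r"
      using L r by (intro mult_right_mono power_increasing) auto
    then show "{r<..L ^ m * r} \<subseteq> {r<..L ^ n * r}"
      by auto
  qed
  ultimately show ?thesis
    using nn_integral_incseq_UN[OF f, of "\<lambda>n. {r<..L ^ n * r}"] by (simp add: image_subset_iff)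
qed

lemma nn_integral_weight_div_Ioc_le:
  assumes dw: "decreasing_weight w" and x: "0 < x" and L: "1 \<le> L"
  shows "(\<integral>\<^sup>+t\<in>{x<..L * x}. ennreal (w t / t) \<partial>lborel) \<le> ennreal (L * (Wprim w x / x))"
proof -
  have w: "weight w" using dw by (rule decreasing_weight_imp_weight)
  have "(\<integral>\<^sup>+t\<in>{x<..L * x}. ennreal (w t / t) \<partial>lborel) \<le>
      (\<integral>\<^sup>+t\<in>{x<..L * x}. ennreal (1 / x) * ennreal (w t) \<partial>lborel)"
  proof (intro nn_integral_mono)
    fix t
    have "w t / t \<le> 1 / x * w t" if "x < t"
      using that x w by (auto simp: weight_def divide_simps intro: mult_left_mono)
    then show "ennreal (w t / t) * indicator {x<..L * x} t \<le> ennreal (1 / x) * ennreal (w t) * indicator {x<..L * x} t"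
      using x by (auto simp: ennreal_mult'[symmetric] intro: ennreal_leI split: split_indicator)
  qed
  also have "\<dots> = ennreal (1 / x * (Wprim w (L * x) - Wprim w x))"
  proof -
    have "(\<lambda>t. ennreal (w t) * indicator {x<..L * x} t) \<in> borel_measurable lborel"
      by (rule weight_indicator_measurable[OF w]) (use x in auto)
    then have "(\<integral>\<^sup>+t\<in>{x<..L * x}. ennreal (1 / x) * ennreal (w t) \<partial>lborel) =
        ennreal (1 / x) * ennreal (Wprim w (L * x) - Wprim w x)"
      using nn_integral_weight_Ioc[OF w, of x "L * x"] x L by (simp add: mult.assoc nn_integral_cmult)
    then show ?thesis
      using x by (simp add: ennreal_mult'[symmetric])
  qed
  also have "\<dots> \<le> ennreal (L * (Wprim w x / x))"
  proof (intro ennreal_leI)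
    have "1 / x * (Wprim w (L * x) - Wprim w x) \<le> L * (Wprim w (L * x) / (L * x))"
      using x L Wprim_nonneg[OF w, of x] by (simp add: field_simps)
    also have "\<dots> \<le> L * (Wprim w x / x)"
      using Wprim_div_antimono[OF dw x, of "L * x"] x L by (intro mult_left_mono) simp_all
    finally show "1 / x * (Wprim w (L * x) - Wprim w x) \<le> L * (Wprim w x / x)" .
  qed
  finally show ?thesis .
qed

lemma nn_integral_weight_div_geometric_le:
  assumes dw: "decreasing_weight w" and L: "1 < L"
    and halves: "\<And>x. 0 < x \<Longrightarrow> Wprim w (L * x) / (L * x) \<le> Wprim w x / x / 2"
    and x: "0 < x"
  shows "(\<integral>\<^sup>+t\<in>{x<..L ^ n * x}. ennreal (w t / t) \<partial>lborel) \<le> ennreal (2 * L * (Wprim w x / x))"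
  using x
proof (induction n arbitrary: x)
  case (Suc n)
  have w: "weight w" using dw by (rule decreasing_weight_imp_weight)
  have "(\<lambda>t. ennreal (1 / t * w t) * indicator {x<..L ^ n * (L * x)} t) \<in> borel_measurable lborel"
    by (rule weight_mult_indicator_measurable[OF w]) (use Suc.prems in auto)
  then have "(\<integral>\<^sup>+t\<in>{x<..L ^ n * (L * x)}. ennreal (w t / t) \<partial>lborel) =
      (\<integral>\<^sup>+t\<in>{x<..L * x}. ennreal (w t / t) \<partial>lborel) +
      (\<integral>\<^sup>+t\<in>{L * x<..L ^ n * (L * x)}. ennreal (w t / t) \<partial>lborel)"
    using Suc.prems L by (intro nn_integral_Ioc_split) (auto simp: one_le_power)
  then have "(\<integral>\<^sup>+t\<in>{x<..L ^ Suc n * x}. ennreal (w t / t) \<partial>lborel) =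
      (\<integral>\<^sup>+t\<in>{x<..L * x}. ennreal (w t / t) \<partial>lborel) +
      (\<integral>\<^sup>+t\<in>{L * x<..L ^ n * (L * x)}. ennreal (w t / t) \<partial>lborel)"
    by (simp add: mult_ac)
  also have "\<dots> \<le> ennreal (L * (Wprim w x / x)) + ennreal (2 * L * (Wprim w (L * x) / (L * x)))"
    using nn_integral_weight_div_Ioc_le[OF dw Suc.prems] Suc.IH[of "L * x"] Suc.prems L
    by (intro add_mono) auto
  also have "\<dots> \<le> ennreal (L * (Wprim w x / x)) + ennreal (L * (Wprim w x / x))"
  proof -
    have "2 * L * (Wprim w (L * x) / (L * x)) \<le> 2 * L * (Wprim w x / x / 2)"
      using halves[OF Suc.prems] L by (intro mult_left_mono) auto
    then show ?thesis
      by (intro add_mono ennreal_leI) auto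
  qed
  also have "\<dots> = ennreal (2 * L * (Wprim w x / x))"
    using Suc.prems L Wprim_nonneg[OF w, of x] by (simp add: ennreal_plus[symmetric] del: ennreal_plus)
  finally show ?case .
qed simp

lemma B1_of_Wprim_div_halves:
  assumes dw: "decreasing_weight w" and L: "1 < L"
    and halves: "\<And>x. 0 < x \<Longrightarrow> Wprim w (L * x) / (L * x) \<le> Wprim w x / x / 2"
  shows "B1 w"
  unfolding B1_def
proof (intro exI[of _ "2 * L"] allI impI)
  fix r :: real
  assume r: "0 < r"
  have w: "weight w" using dw by (rule decreasing_weight_imp_weight)
  define g where "g t = ennreal (w t / t) * indicator {0<..} t" for t
  have g_meas: "g \<in> borel_measurable lborel"
    using weight_mult_indicator_measurable[OF w, of "\<lambda>t. 1 / t" "{0<..}"] by (simp add: g_def[abs_def])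
  have g_eq: "(\<integral>\<^sup>+t\<in>{r<..y}. g t \<partial>lborel) = (\<integral>\<^sup>+t\<in>{r<..y}. ennreal (w t / t) \<partial>lborel)" for y
    using r by (intro nn_integral_cong) (simp add: g_def split: split_indicator)
  have "(\<integral>\<^sup>+t\<in>{r<..}. ennreal (w t / t) \<partial>lborel) = (\<integral>\<^sup>+t\<in>{r<..}. g t \<partial>lborel)"
    using r by (intro nn_integral_cong) (simp add: g_def split: split_indicator)
  also have "\<dots> = (SUP n. \<integral>\<^sup>+t\<in>{r<..L ^ n * r}. g t \<partial>lborel)"
    by (rule nn_integral_Ioi_eq_SUP_power[OF g_meas L r])
  also have "\<dots> \<le> ennreal (2 * L * (Wprim w r / r))"
    using nn_integral_weight_div_geometric_le[OF dw L halves r] by (intro SUP_least) (simp add: g_eq)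
  finally show "(\<integral>\<^sup>+s\<in>{r<..}. ennreal (w s / s) \<partial>lborel) \<le> ennreal (2 * L / r * Wprim w r)"
    by simp
qed

lemma B1_of_Gamma_spaces_eq:
  assumes dw: "decreasing_weight w" and "weight u" "1 \<le> q"
    and "level_equiv w q u" "Gamma_spaces_eq TYPE('a::euclidean_space) w q u"
  shows "B1 w"
proof -
  obtain K where "0 \<le> K" and "\<And>a. 0 < a \<Longrightarrow>
      ennreal (a powr q) * (\<integral>\<^sup>+x\<in>{a<..}. ennreal (Wpow_weight w q x * x powr - q) \<partial>lborel) \<le>
      ennreal (K * Wprim w a powr q)"
    using Wpow_weight_tail_bound_of_Gamma_spaces_eq[OF decreasing_weight_imp_weight[OF dw] assms(2-5)] by blast
  then obtain L where "1 < L" "\<And>x. 0 < x \<Longrightarrow> Wprim w (L * x) / (L * x) \<le> Wprim w x / x / 2"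
    using Wprim_div_halves_of_tail_bound[OF dw \<open>1 \<le> q\<close>] by blast
  then show ?thesis
    by (rule B1_of_Wprim_div_halves[OF dw])
qed

theorem proposition3p5:
  fixes w :: "real \<Rightarrow> real"
  assumes "decreasing_weight w"
  shows "B1 w \<longleftrightarrow>
    (\<forall>q::real. 1 < q \<longrightarrow> (\<exists>wq. weight wq \<and> level_equiv w q wq \<and>
        Gamma_spaces_eq TYPE('a::euclidean_space) w q wq))"
proof
  assume "B1 w"
  show "\<forall>q::real. 1 < q \<longrightarrow> (\<exists>wq. weight wq \<and> level_equiv w q wq \<and>
      Gamma_spaces_eq TYPE('a::euclidean_space) w q wq)"
  proof (intro allI impI)
    fix q :: real
    assume "1 < q"
    then show "\<exists>wq. weight wq \<and> level_equiv w q wq \<and> Gamma_spaces_eq TYPE('a) w q wq"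
      using weight_Wpow_weight[OF decreasing_weight_imp_weight[OF assms]] \<open>B1 w\<close>
        level_equiv_Wpow_weight[OF assms] Gamma_spaces_eq_Wpow_weight
      by (intro exI[of _ "Wpow_weight w q"]) auto
  qed
next
  assume "\<forall>q::real. 1 < q \<longrightarrow> (\<exists>wq. weight wq \<and> level_equiv w q wq \<and>
      Gamma_spaces_eq TYPE('a::euclidean_space) w q wq)"
  then obtain u where "weight u" "level_equiv w 2 u" "Gamma_spaces_eq TYPE('a) w 2 u"
    by force
  then show "B1 w"
    by (intro B1_of_Gamma_spaces_eq[OF assms]) auto
qed

end
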